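(* Let $q$ be a prime power and $h,m\ge1$. Suppose that every pair $(f,g)$ of invertible $\mathbb F_q$-linearised polynomials over $\mathbb F_{q^h}$ satisfying property $(Prop_m)$ consists of monomials. Then every $\mathbb F_q$-linear $(n,q^{3h},n-2)_{q^h}$ code $C$ over $\mathbb F_{q^h}$ with $n\ge 3+m$ which has at least three coordinates from which the projections are $\mathbb F_q$-equivalent to linear codes is itself $\mathbb F_q$-equivalent to a linear code.
   Context: An $\mathbb F_q$-linearised polynomial over $\mathbb F_{q^h}$ is $\sum_{l=0}^{h-1}a_lX^{q^l}$ with $a_l\in\mathbb F_{q^h}$, viewed as a map of $\mathbb F_{q^h}$; invertible means bijective; a monomial is one with exactly one nonzero coefficient. Identities $\equiv$ between such polynomials mean equality as maps. Property $(Prop_m)$: $(f,g)$ satisfies it if there exist triples $(a_j,b_j,c_j)\in(\mathbb F_{q^h}^* )^3$, $1\le j\le m$, with $(a_1,b_1,c_1)=(1,1,1)$, such that $a_jf(b_jf^{-1}(X))\equiv g(c_jg^{-1}(X))$ for every $j$, and for all $i\ne j$: $a_i\ne a_j$, $b_i\ne b_j$, $c_i\ne c_j$. An $\mathbb F_q$-linear code over $\mathbb F_{q^h}$ is an $\mathbb F_q$-subspace of $\mathbb F_{q^h}^n$; an $(n,M,d)_{q^h}$ code has $M$ codewords and minimum distance $d$; linear means $\mathbb F_{q^h}$-linear. Two $\mathbb F_q$-linear codes are $\mathbb F_q$-equivalent if one is obtained from the other by permuting coordinates and applying in each coordinate an $\mathbb F_q$-linear bijection of $\mathbb F_{q^h}$.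 The projection of $C$ from position $i$ is $\{(x_1,\dots,x_{i-1},x_{i+1},\dots,x_n):(x_1,\dots,x_{i-1},0,x_{i+1},\dots,x_n)\in C\}$. *)

theory Defs
  imports Main "HOL-Computational_Algebra.Primes" "HOL-Combinatorics.Permutations"
begin

(* Ambient field F_{q^h} is a finite field type 'a with CARD('a) = q^h.
   The subfield F_q is the set of roots of X^q - X. *)
definition Fq :: "nat \<Rightarrow> 'a::{finite,field} set" where
  "Fq q = {x. x ^ q = x}"

definition prime_power :: "nat \<Rightarrow> bool" where
  "prime_power q \<longleftrightarrow> (\<exists>p k. prime p \<and> k \<ge> 1 \<and> q = p ^ k)"

(* F_q-linearised polynomial sum_{l<h} a_l X^{q^l}, given by its coefficients *)
definition lin_eval :: "nat \<Rightarrow> nat \<Rightarrow> (nat \<Rightarrow> 'a::{finite,field}) \<Rightarrow> 'a \<Rightarrow> 'a" where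
  "lin_eval q h a x = (\<Sum>l<h. a l * x ^ (q ^ l))"

definition lin_invertible :: "nat \<Rightarrow> nat \<Rightarrow> (nat \<Rightarrow> 'a::{finite,field}) \<Rightarrow> bool" where
  "lin_invertible q h a \<longleftrightarrow> bij (lin_eval q h a)"

definition lin_monomial :: "nat \<Rightarrow> (nat \<Rightarrow> 'a::{finite,field}) \<Rightarrow> bool" where
  "lin_monomial h a \<longleftrightarrow> card {l. l < h \<and> a l \<noteq> 0} = 1"

definition Prop :: "nat \<Rightarrow> nat \<Rightarrow> nat \<Rightarrow> (nat \<Rightarrow> 'a::{finite,field}) \<Rightarrow> (nat \<Rightarrow> 'a) \<Rightarrow> bool" where
  "Prop q h m f g \<longleftrightarrow>
     (\<exists>A B C :: nat \<Rightarrow> 'a.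
        (\<forall>j\<in>{1..m}. A j \<noteq> 0 \<and> B j \<noteq> 0 \<and> C j \<noteq> 0) \<and>
        A 1 = 1 \<and> B 1 = 1 \<and> C 1 = 1 \<and>
        (\<forall>j\<in>{1..m}. \<forall>x.
           A j * lin_eval q h f (B j * inv (lin_eval q h f) x)
             = lin_eval q h g (C j * inv (lin_eval q h g) x)) \<and>
        inj_on A {1..m} \<and> inj_on B {1..m} \<and> inj_on C {1..m})"

definition Fq_linear_code :: "nat \<Rightarrow> nat \<Rightarrow> 'a::{finite,field} list set \<Rightarrow> bool" where
  "Fq_linear_code q n C \<longleftrightarrow>
     C \<subseteq> {x. length x = n} \<and> replicate n 0 \<in> C \<and>
     (\<forall>x\<in>C. \<forall>y\<in>C. map2 (+) x y \<in> C) \<and>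
     (\<forall>c\<in>Fq q. \<forall>x\<in>C. map (\<lambda>t. c * t) x \<in> C)"

definition linear_code :: "nat \<Rightarrow> 'a::{finite,field} list set \<Rightarrow> bool" where
  "linear_code n C \<longleftrightarrow>
     C \<subseteq> {x. length x = n} \<and> replicate n 0 \<in> C \<and>
     (\<forall>x\<in>C. \<forall>y\<in>C. map2 (+) x y \<in> C) \<and>
     (\<forall>c. \<forall>x\<in>C. map (\<lambda>t. c * t) x \<in> C)"

definition hamming :: "'a list \<Rightarrow> 'a list \<Rightarrow> nat" where
  "hamming x y = card {i. i < length x \<and> x ! i \<noteq> y ! i}"

definition min_dist :: "'a list set \<Rightarrow> nat" where
  "min_dist C = Min {hamming x y | x y. x \<in> C \<and> y \<in> C \<and> x \<noteq> y}"

definition Fq_lin_bij :: "nat \<Rightarrow> ('a::{finite,field} \<Rightarrow> 'a) \<Rightarrow> bool" where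
  "Fq_lin_bij q \<phi> \<longleftrightarrow> bij \<phi> \<and> (\<forall>x y. \<phi> (x + y) = \<phi> x + \<phi> y) \<and>
     (\<forall>c\<in>Fq q. \<forall>x. \<phi> (c * x) = c * \<phi> x)"

definition Fq_equiv :: "nat \<Rightarrow> nat \<Rightarrow> 'a::{finite,field} list set \<Rightarrow> 'a list set \<Rightarrow> bool" where
  "Fq_equiv q n C D \<longleftrightarrow>
     (\<exists>\<sigma> \<phi>. \<sigma> permutes {..<n} \<and> (\<forall>i<n. Fq_lin_bij q (\<phi> i)) \<and>
        D = (\<lambda>x. map (\<lambda>i. \<phi> i (x ! \<sigma> i)) [0..<n]) ` C)"

definition projection :: "nat \<Rightarrow> 'a::zero list set \<Rightarrow> 'a list set" where
  "projection i C = {take i x @ drop (Suc i) x | x. x \<in> C \<and> x ! i = 0}"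

end

(*
  Since |C| = q^(3h) and d = n - 2, the code is MDS: any three coordinates determine a
  codeword and take every triple of values. Let Phi, Psi, Omega be the coordinate maps
  making the projections from k, j, i linear. In the Phi-coordinates the codewords
  vanishing at k form a plane over F_(q^h), so every further coordinate l is
  u_l Phi_i + v_l Phi_j, with pairwise non-proportional (u_l, v_l); likewise for Psi and
  Omega. Chasing codewords through the three planes shows that, at a fixed coordinate t
  outside {i, j, k}, the transition maps f = Phi_t o Psi_t^-1 and g = Phi_t o Omega_t^-1
  satisfy a_l f(b_l f^-1(x)) = g(c_l g^-1(x)) for every further coordinate l, with cross
  ratios a_l, b_l, c_l that are injective in l. As n >= 3 + m, this is (Prop_m). Every
  F_q-linear map of F_(q^h) is a linearised polynomial, so f is a monomial c X^(q^s).
  Then Phi and Psi differ by the same Frobenius twist at every coordinate, and replacing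
  Phi_k by Psi_k^(q^s) gives coordinates in which the whole code is F_(q^h)-linear.
*)
theory Submission
  imports Defs "HOL-Computational_Algebra.Polynomial" "HOL-Library.FuncSet"
begin

text \<open>This is \<open>CHAR_dvd_CARD\<close> of \<open>HOL-Number_Theory.Residues\<close>, whose HOL-Algebra
  syntax for \<open>inv\<close> would clash with the inverse functions used below.\<close>
lemma CHAR_dvd_card_UNIV: "CHAR('a) dvd card (UNIV :: 'a::{finite,ring_1} set)"
proof -
  have "(\<Sum>x\<in>UNIV. x) = (\<Sum>x\<in>UNIV. x + (1::'a))"
    by (rule sum.reindex_bij_witness[of _ "\<lambda>y. y + 1" "\<lambda>y. y - 1"]) auto
  then have "of_nat (card (UNIV :: 'a set)) = (0::'a)"
    by (simp add: sum.distrib)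
  then show ?thesis
    by (simp add: of_nat_eq_0_iff_char_dvd)
qed

text \<open>The library's \<open>finite_field_power_card_eq_same\<close> needs the sort \<open>finite_field\<close>.\<close>
lemma power_card_UNIV_eq_self:
  fixes x :: "'a::{finite,field}"
  shows "x ^ card (UNIV :: 'a set) = x"
proof (cases "x = 0")
  case True
  then show ?thesis by (simp add: finite_UNIV_card_ge_0)
next
  case False
  let ?U = "UNIV - {0::'a}"
  have "(\<Prod>y\<in>?U. x * y) = \<Prod>?U"
    using False by (intro prod.reindex_bij_witness[of _ "\<lambda>y. y / x" "\<lambda>y. x * y"]) auto
  then have "x ^ card ?U * \<Prod>?U = 1 * \<Prod>?U"
    by (simp add: prod.distrib)
  moreover have "\<Prod>?U \<noteq> 0"
    by simp
  ultimately have "x ^ card ?U = 1"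
    using mult_cancel_right by blast
  moreover have "card (UNIV :: 'a set) = Suc (card ?U)"
    using finite_UNIV_card_ge_0[where 'a='a] by (simp add: card_Diff_singleton)
  ultimately show ?thesis
    by (simp only: power_Suc2 mult_1)
qed

lemma power_eq_Suc_pred_mult:
  fixes q h :: nat
  assumes "1 \<le> q"
  shows "\<exists>t. q ^ h = Suc ((q - 1) * t)"
proof (induction h)
  case (Suc h)
  then obtain t where "q ^ h = Suc ((q - 1) * t)"
    by blast
  with assms have "q ^ Suc h = Suc ((q - 1) * (1 + q * t))"
    by (cases q) (simp_all add: algebra_simps)
  then show ?case
    by blast
qed simp

lemma Fq_lin_bij_add: "Fq_lin_bij q \<phi> \<Longrightarrow> \<phi> (x + y) = \<phi> x + \<phi> y"
  unfolding Fq_lin_bij_def by blast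

lemma Fq_lin_bij_zero: "Fq_lin_bij q \<phi> \<Longrightarrow> \<phi> 0 = 0"
  using Fq_lin_bij_add[of q \<phi> 0 0] by (metis add_cancel_right_right)

lemma Fq_lin_bij_inv_f: "Fq_lin_bij q \<phi> \<Longrightarrow> inv \<phi> (\<phi> x) = x"
  unfolding Fq_lin_bij_def by (simp add: bij_is_inj)

lemma Fq_lin_bij_f_inv: "Fq_lin_bij q \<phi> \<Longrightarrow> \<phi> (inv \<phi> x) = x"
  unfolding Fq_lin_bij_def by (simp add: bij_is_surj surj_f_inv_f)

lemma Fq_lin_bij_eq_iff: "Fq_lin_bij q \<phi> \<Longrightarrow> \<phi> x = \<phi> y \<longleftrightarrow> x = y"
  by (metis Fq_lin_bij_inv_f)

lemma Fq_lin_bij_eq_0_iff: "Fq_lin_bij q \<phi> \<Longrightarrow> \<phi> x = 0 \<longleftrightarrow> x = 0"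
  by (metis Fq_lin_bij_eq_iff Fq_lin_bij_zero)

lemma Fq_lin_bij_comp: "Fq_lin_bij q \<phi> \<Longrightarrow> Fq_lin_bij q \<psi> \<Longrightarrow> Fq_lin_bij q (\<phi> \<circ> \<psi>)"
  unfolding Fq_lin_bij_def by (auto intro: bij_comp)

lemma Fq_lin_bij_inv:
  assumes "Fq_lin_bij q (\<phi> :: 'a::{finite,field} \<Rightarrow> 'a)"
  shows "Fq_lin_bij q (inv \<phi>)"
  unfolding Fq_lin_bij_def
proof (intro conjI allI ballI)
  show "bij (inv \<phi>)"
    using assms unfolding Fq_lin_bij_def by (simp add: bij_imp_bij_inv)
  show "inv \<phi> (x + y) = inv \<phi> x + inv \<phi> y" for x y
    using Fq_lin_bij_add[OF assms] Fq_lin_bij_f_inv[OF assms] Fq_lin_bij_inv_f[OF assms]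
    by metis
  show "inv \<phi> (c * x) = c * inv \<phi> x" if "c \<in> Fq q" for c x
    using that assms Fq_lin_bij_f_inv[OF assms] Fq_lin_bij_inv_f[OF assms]
    unfolding Fq_lin_bij_def by metis
qed

lemma lin_monomial_eval:
  assumes "lin_monomial h F"
  obtains s where "\<And>y. lin_eval q h F y = F s * y ^ q ^ s"
proof -
  obtain s where s: "{l. l < h \<and> F l \<noteq> 0} = {s}"
    using assms unfolding lin_monomial_def by (rule card_1_singletonE)
  then have "lin_eval q h F y = (\<Sum>l\<in>{s}. F l * y ^ q ^ l)" for y
    unfolding lin_eval_def by (intro sum.mono_neutral_right) auto
  with s show ?thesis
    using that by auto
qed

definition cross_ratio :: "(nat \<Rightarrow> 'a::field) \<Rightarrow> (nat \<Rightarrow> 'a) \<Rightarrow> nat \<Rightarrow> nat \<Rightarrow> 'a" where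
  "cross_ratio u v t l = u t * v l / (u l * v t)"

locale Fqh_field =
  fixes q h :: nat and field_type :: "'a::{finite,field} itself"
  assumes prime_power_q: "prime_power q"
    and h_pos: "1 \<le> h"
    and card_UNIV: "card (UNIV :: 'a set) = q ^ h"
begin

lemma q_ge_2: "2 \<le> q"
proof -
  obtain p k where "prime p" "1 \<le> k" "q = p ^ k"
    using prime_power_q unfolding prime_power_def by blast
  then show ?thesis
    using prime_ge_2_nat[of p] self_le_power[of p k] by simp
qed

lemma q_eq_CHAR_power: "\<exists>k. q = CHAR('a) ^ k"
proof -
  obtain p k where p: "prime p" "1 \<le> k" "q = p ^ k"
    using prime_power_q unfolding prime_power_def by blast
  have prime_CHAR: "prime CHAR('a)"
    by (simp add: prime_CHAR_semidom finite_imp_CHAR_pos)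
  have "CHAR('a) dvd p ^ (k * h)"
    using CHAR_dvd_card_UNIV[where 'a='a] card_UNIV p by (simp add: power_mult)
  then have "CHAR('a) = p"
    using prime_CHAR p(1) prime_dvd_power primes_dvd_imp_eq by blast
  with p show ?thesis
    by blast
qed

lemma frobenius_add: "(x + y) ^ q ^ l = x ^ q ^ l + y ^ q ^ l" for x y :: 'a
proof -
  obtain k where "q = CHAR('a) ^ k"
    using q_eq_CHAR_power by blast
  then show ?thesis
    by (intro freshmans_dream'[where n = "k * l"])
      (simp_all add: prime_CHAR_semidom finite_imp_CHAR_pos power_mult)
qed

lemma frobenius_uminus: "(- x) ^ q ^ l = - (x ^ q ^ l)" for x :: 'a
proof -
  have "x ^ q ^ l + (- x) ^ q ^ l = 0"
    using frobenius_add[of x "- x" l] q_ge_2 by (simp add: zero_power)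
  then show ?thesis
    by (simp add: eq_neg_iff_add_eq_0 add.commute)
qed

lemma Fq_zero: "0 \<in> (Fq q :: 'a set)"
  using q_ge_2 by (simp add: Fq_def)

lemma Fq_one: "1 \<in> (Fq q :: 'a set)"
  by (simp add: Fq_def)

lemma Fq_uminus: "a \<in> Fq q \<Longrightarrow> - a \<in> (Fq q :: 'a set)"
  using frobenius_uminus[of a 1] by (simp add: Fq_def)

lemma Fq_diff: "a \<in> Fq q \<Longrightarrow> b \<in> Fq q \<Longrightarrow> a - b \<in> (Fq q :: 'a set)"
  using frobenius_add[of a "- b" 1] frobenius_uminus[of b 1] by (simp add: Fq_def)

lemma Fq_mult: "a \<in> Fq q \<Longrightarrow> b \<in> Fq q \<Longrightarrow> a * b \<in> (Fq q :: 'a set)"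
  by (simp add: Fq_def power_mult_distrib)

lemma Fq_inverse: "a \<in> Fq q \<Longrightarrow> inverse a \<in> (Fq q :: 'a set)"
  by (simp add: Fq_def power_inverse)

lemma Fq_power_q_power: "a \<in> Fq q \<Longrightarrow> a ^ q ^ l = (a :: 'a)"
proof (induction l)
  case (Suc l)
  then show ?case
    by (simp add: Fq_def power_mult mult.commute[of q])
qed simp

lemma Fq_lin_bij_frobenius_power: "Fq_lin_bij q (\<lambda>y :: 'a. y ^ q ^ s)"
  unfolding Fq_lin_bij_def
proof (intro conjI allI ballI)
  have "inj (\<lambda>y :: 'a. y ^ q ^ s)"
  proof (rule injI)
    fix x y :: 'a
    assume "x ^ q ^ s = y ^ q ^ s"
    then have "(x - y) ^ q ^ s = 0"
      using frobenius_add[of x "- y" s] frobenius_uminus[of y s] by simp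
    then show "x = y"
      by simp
  qed
  then show "bij (\<lambda>y :: 'a. y ^ q ^ s)"
    by (simp add: bij_def finite_UNIV_inj_surj)
  show "(x + y) ^ q ^ s = x ^ q ^ s + y ^ q ^ s" for x y :: 'a
    by (rule frobenius_add)
  show "(c * x) ^ q ^ s = c * x ^ q ^ s" if "c \<in> Fq q" for c x :: 'a
    using that by (simp add: power_mult_distrib Fq_power_q_power)
qed

text \<open>\<open>P\<close> is the quotient \<open>(X\<^sup>Q - X) / (X\<^sup>q - X)\<close>, \<open>Q = q\<^sup>h\<close>, written as a
  geometric sum in \<open>X\<^bsup>q-1\<^esup>\<close>.\<close>
lemma exists_poly_vanishing_off_Fq:
  "\<exists>P :: 'a poly. P \<noteq> 0 \<and> degree P \<le> card (UNIV :: 'a set) - q \<and>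
     (\<forall>x. x \<notin> Fq q \<longrightarrow> poly P x = 0)"
proof -
  let ?Q = "card (UNIV :: 'a set)"
  obtain t where Q_eq: "?Q = Suc ((q - 1) * t)"
    using power_eq_Suc_pred_mult[of q h] q_ge_2 card_UNIV by auto
  have q_le_Q: "q \<le> ?Q"
    using card_UNIV h_pos q_ge_2 self_le_power[of q h] by simp
  define P :: "'a poly" where "P = (\<Sum>i<t. monom 1 ((q - 1) * i))"
  have poly_P: "poly P x = (\<Sum>i<t. (x ^ (q - 1)) ^ i)" for x
    by (simp add: P_def poly_sum poly_monom power_mult)
  have "1 \<le> t"
    using Q_eq q_le_Q q_ge_2 by (cases t) auto
  then have "poly P 0 = 1"
    using q_ge_2 by (simp add: poly_P power_0_left sum.If_cases)
  then have "P \<noteq> 0"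
    by auto
  moreover have "degree P \<le> ?Q - q"
    unfolding P_def
  proof (intro degree_sum_le order.trans[OF degree_monom_le])
    fix i
    assume "i \<in> {..<t}"
    then have "(q - 1) * i \<le> (q - 1) * (t - 1)"
      by (intro mult_le_mono2) simp
    also have "\<dots> = ?Q - q"
      using Q_eq q_le_Q q_ge_2 by (simp add: diff_mult_distrib2)
    finally show "(q - 1) * i \<le> ?Q - q" .
  qed simp
  moreover have "poly P x = 0" if "x \<notin> Fq q" for x
  proof -
    have "x ^ q = x * x ^ (q - 1)"
      using q_ge_2 by (simp flip: power_Suc)
    then have "(x ^ q - x) * poly P x = x * ((x ^ (q - 1) - 1) * (\<Sum>i<t. (x ^ (q - 1)) ^ i))"
      by (simp add: poly_P algebra_simps)
    also have "\<dots> = x * x ^ ((q - 1) * t) - x"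
      by (simp add: power_diff_1_eq[symmetric] power_mult right_diff_distrib)
    also have "x * x ^ ((q - 1) * t) = x ^ ?Q"
      using Q_eq by (simp only: power_Suc)
    finally have "(x ^ q - x) * poly P x = 0"
      by (simp add: power_card_UNIV_eq_self)
    with that show ?thesis
      by (simp add: Fq_def)
  qed
  ultimately show ?thesis
    by blast
qed

lemma card_Fq_ge: "q \<le> card (Fq q :: 'a set)"
proof -
  obtain P :: "'a poly" where P: "P \<noteq> 0" "degree P \<le> card (UNIV :: 'a set) - q"
    and vanishing: "\<forall>x. x \<notin> Fq q \<longrightarrow> poly P x = 0"
    using exists_poly_vanishing_off_Fq by blast
  have "UNIV = Fq q \<union> {x. poly P x = 0}"
    using vanishing by blast
  then have "card (UNIV :: 'a set) \<le> card (Fq q :: 'a set) + card {x. poly P x = 0}"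
    by (metis card_Un_le)
  moreover have "card {x. poly P x = 0} \<le> card (UNIV :: 'a set) - q"
    using card_poly_roots_bound[OF P(1)] P(2) by linarith
  moreover have "q \<le> card (UNIV :: 'a set)"
    using card_UNIV h_pos q_ge_2 self_le_power[of q h] by simp
  ultimately show ?thesis
    by linarith
qed

definition Fq_span :: "(nat \<Rightarrow> 'a) \<Rightarrow> nat \<Rightarrow> 'a set" where
  "Fq_span e k = {\<Sum>i<k. c i * e i | c. \<forall>i<k. c i \<in> Fq q}"

lemma Fq_span_diff:
  assumes "x \<in> Fq_span e k" "y \<in> Fq_span e k"
  shows "x - y \<in> Fq_span e k"
proof -
  obtain c d where c: "x = (\<Sum>i<k. c i * e i)" "\<forall>i<k. c i \<in> Fq q"
    and d: "y = (\<Sum>i<k. d i * e i)" "\<forall>i<k. d i \<in> Fq q"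
    using assms unfolding Fq_span_def by blast
  have "x - y = (\<Sum>i<k. (c i - d i) * e i)"
    using c d by (simp add: sum_subtractf left_diff_distrib)
  with c d Fq_diff show ?thesis
    unfolding Fq_span_def by (auto intro!: exI[of _ "\<lambda>i. c i - d i"])
qed

lemma Fq_span_smult:
  assumes "a \<in> Fq q" "x \<in> Fq_span e k"
  shows "a * x \<in> Fq_span e k"
proof -
  obtain c where c: "x = (\<Sum>i<k. c i * e i)" "\<forall>i<k. c i \<in> Fq q"
    using assms unfolding Fq_span_def by blast
  have "a * x = (\<Sum>i<k. (a * c i) * e i)"
    using c by (simp add: sum_distrib_left mult.assoc)
  with c assms(1) Fq_mult show ?thesis
    unfolding Fq_span_def by (auto intro!: exI[of _ "\<lambda>i. a * c i"])
qed

lemma Fq_span_Suc: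
  assumes "a \<in> Fq q" "x \<in> Fq_span e k"
  shows "a * e k + x \<in> Fq_span e (Suc k)"
proof -
  obtain c where c: "x = (\<Sum>i<k. c i * e i)" "\<forall>i<k. c i \<in> Fq q"
    using assms unfolding Fq_span_def by blast
  have "a * e k + x = (\<Sum>i<Suc k. (c(k := a)) i * e i)"
    using c by (simp add: add.commute)
  moreover have "\<forall>i<Suc k. (c(k := a)) i \<in> Fq q"
    using c assms(1) by (simp add: less_Suc_eq)
  ultimately show ?thesis
    unfolding Fq_span_def by blast
qed

lemma Fq_span_mono: "Fq_span e k \<subseteq> Fq_span e (Suc k)"
  using Fq_span_Suc[OF Fq_zero, of _ e k] by auto

lemma Fq_span_cong: "(\<And>i. i < k \<Longrightarrow> e i = e' i) \<Longrightarrow> Fq_span e k = Fq_span e' k"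
  unfolding Fq_span_def by (metis (no_types, lifting) lessThan_iff sum.cong)

lemma card_Fq_span_Suc:
  assumes "e k \<notin> Fq_span e k"
  shows "card (Fq q :: 'a set) * card (Fq_span e k) \<le> card (Fq_span e (Suc k))"
proof -
  have "inj_on (\<lambda>(a, x). a * e k + x) (Fq q \<times> Fq_span e k)"
  proof (rule inj_onI, clarify)
    fix a x b y
    assume ab: "a \<in> Fq q" "x \<in> Fq_span e k" "b \<in> Fq q" "y \<in> Fq_span e k"
      and eq: "a * e k + x = b * e k + y"
    have "a = b"
    proof (rule ccontr)
      assume "a \<noteq> b"
      with eq have "e k = inverse (a - b) * (y - x)"
        by (simp add: field_simps)
      moreover have "inverse (a - b) * (y - x) \<in> Fq_span e k"
        using ab by (intro Fq_span_smult Fq_span_diff Fq_inverse Fq_diff)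
      ultimately show False
        using assms by simp
    qed
    with eq show "a = b \<and> x = y"
      by simp
  qed
  moreover have "(\<lambda>(a, x). a * e k + x) ` (Fq q \<times> Fq_span e k) \<subseteq> Fq_span e (Suc k)"
    using Fq_span_Suc by auto
  ultimately show ?thesis
    by (metis card_cartesian_product card_inj_on_le finite)
qed

lemma exists_Fq_span_large: "\<exists>e. Fq_span e k = UNIV \<or> q ^ k \<le> card (Fq_span e k)"
proof (induction k)
  case 0
  have "Fq_span e 0 = {0}" for e
    unfolding Fq_span_def by auto
  then show ?case
    by simp
next
  case (Suc k)
  then obtain e where e: "Fq_span e k = UNIV \<or> q ^ k \<le> card (Fq_span e k)"
    by blast
  show ?case
  proof (cases "Fq_span e k = UNIV")
    case True
    then show ?thesis
      using Fq_span_mono[of e k] by auto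
  next
    case False
    then obtain x where x: "x \<notin> Fq_span e k"
      by auto
    define e' where "e' = e(k := x)"
    have span_e': "Fq_span e' k = Fq_span e k"
      unfolding e'_def by (intro Fq_span_cong) auto
    have "q * q ^ k \<le> card (Fq q :: 'a set) * card (Fq_span e' k)"
      using False e card_Fq_ge span_e' by (intro mult_le_mono) auto
    also have "\<dots> \<le> card (Fq_span e' (Suc k))"
      using x span_e' by (intro card_Fq_span_Suc) (simp add: e'_def)
    finally show ?thesis
      by auto
  qed
qed

lemma exists_Fq_spanning: "\<exists>e. Fq_span e h = UNIV"
  using exists_Fq_span_large[of h] card_UNIV
  by (metis card_seteq finite subset_UNIV)

definition Fq_linear_maps :: "('a \<Rightarrow> 'a) set" where
  "Fq_linear_maps =
     {\<phi>. (\<forall>x y. \<phi> (x + y) = \<phi> x + \<phi> y) \<and> (\<forall>c\<in>Fq q. \<forall>x. \<phi> (c * x) = c * \<phi> x)}"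

lemma Fq_linear_maps_sum:
  assumes "\<phi> \<in> Fq_linear_maps"
  shows "\<phi> (sum g A) = (\<Sum>x\<in>A. \<phi> (g x))"
proof -
  have add: "\<phi> (x + y) = \<phi> x + \<phi> y" for x y
    using assms unfolding Fq_linear_maps_def by blast
  then have "\<phi> 0 = 0"
    by (metis add_cancel_right_right)
  with add show ?thesis
    using sum_comp_morphism[of \<phi> g A] by simp
qed

lemma card_Fq_linear_maps: "card Fq_linear_maps \<le> card (UNIV :: 'a set) ^ h"
proof -
  obtain e where e: "Fq_span e h = UNIV"
    using exists_Fq_spanning by blast
  let ?values = "\<lambda>\<phi>. restrict (\<lambda>i. \<phi> (e i)) {..<h}"
  have "inj_on ?values Fq_linear_maps"
  proof (rule inj_onI)
    fix \<phi> \<psi>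
    assume \<phi>: "\<phi> \<in> Fq_linear_maps" and \<psi>: "\<psi> \<in> Fq_linear_maps"
      and eq: "?values \<phi> = ?values \<psi>"
    show "\<phi> = \<psi>"
    proof
      fix x
      obtain c where c: "x = (\<Sum>i<h. c i * e i)" "\<forall>i<h. c i \<in> Fq q"
        using e unfolding Fq_span_def by blast
      have "\<phi> (c i * e i) = \<psi> (c i * e i)" if "i < h" for i
        using \<phi> \<psi> c(2) fun_cong[OF eq, of i] that by (simp add: Fq_linear_maps_def)
      then show "\<phi> x = \<psi> x"
        unfolding c(1) Fq_linear_maps_sum[OF \<phi>] Fq_linear_maps_sum[OF \<psi>] by simp
    qed
  qed
  moreover have "?values ` Fq_linear_maps \<subseteq> PiE {..<h} (\<lambda>_. UNIV)"
    by (intro image_subsetI) (simp add: restrict_PiE_iff)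
  ultimately have "card Fq_linear_maps \<le> card (PiE {..<h} (\<lambda>_. UNIV :: 'a set))"
    by (intro card_inj_on_le) (auto intro!: finite_PiE)
  then show ?thesis
    by (simp add: card_PiE)
qed

lemma lin_eval_in_Fq_linear_maps: "lin_eval q h F \<in> Fq_linear_maps"
  unfolding Fq_linear_maps_def lin_eval_def
  by (auto simp: frobenius_add distrib_left sum.distrib power_mult_distrib Fq_power_q_power
      mult_ac sum_distrib_left)

text \<open>Since \<open>q\<^bsup>h-1\<^esup> < q\<^sup>h\<close>, a linearised polynomial is determined by its values.\<close>
lemma inj_on_lin_eval: "inj_on (lin_eval q h) (PiE {..<h} (\<lambda>_. UNIV :: 'a set))"
proof (rule inj_onI)
  fix F G
  assume F: "F \<in> PiE {..<h} (\<lambda>_. UNIV :: 'a set)" and G: "G \<in> PiE {..<h} (\<lambda>_. UNIV :: 'a set)"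
    and eq: "lin_eval q h F = lin_eval q h G"
  define lin_poly :: "(nat \<Rightarrow> 'a) \<Rightarrow> 'a poly" where
    "lin_poly F = (\<Sum>l<h. monom (F l) (q ^ l))" for F
  have poly_lin_poly: "poly (lin_poly F) = lin_eval q h F" for F
    by (simp add: lin_poly_def lin_eval_def poly_sum poly_monom fun_eq_iff)
  have coeff_lin_poly: "coeff (lin_poly F) (q ^ s) = F s" if "s < h" for F s
    using that q_ge_2 by (simp add: lin_poly_def coeff_sum)
  have "degree (lin_poly F) \<le> q ^ (h - 1)" for F
    unfolding lin_poly_def using q_ge_2
    by (intro degree_sum_le order.trans[OF degree_monom_le] power_increasing) auto
  moreover have "q ^ (h - 1) < card (UNIV :: 'a set)"
    unfolding card_UNIV using q_ge_2 h_pos by (intro power_strict_increasing) auto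
  ultimately have "lin_poly F = lin_poly G"
    using eq by (intro poly_eqI_degree[of UNIV]) (auto simp: poly_lin_poly intro: le_less_trans)
  then show "F = G"
    using F G coeff_lin_poly by (metis PiE_ext lessThan_iff)
qed

lemma Fq_linear_map_is_lin_eval:
  assumes "\<phi> \<in> Fq_linear_maps"
  shows "\<exists>F. lin_eval q h F = \<phi>"
proof -
  let ?V = "PiE {..<h} (\<lambda>_. UNIV :: 'a set)"
  have "card Fq_linear_maps \<le> card (lin_eval q h ` ?V)"
    using card_Fq_linear_maps inj_on_lin_eval by (simp add: card_image card_PiE)
  moreover have "lin_eval q h ` ?V \<subseteq> Fq_linear_maps"
    using lin_eval_in_Fq_linear_maps by auto
  ultimately have "lin_eval q h ` ?V = Fq_linear_maps"
    by (intro card_seteq) auto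
  with assms show ?thesis
    by (metis imageE)
qed

end

lemma nth_take_append_drop_Suc:
  assumes "k < length x" "l < length x" "l \<noteq> k"
  shows "(take k x @ drop (Suc k) x) ! (if l < k then l else l - 1) = x ! l"
  using assms by (auto simp: nth_append min_def)

locale mds_code = Fqh_field q h field_type
  for q h :: nat and field_type :: "'a::{finite,field} itself" +
  fixes n :: nat and C :: "'a list set"
  assumes Fq_linear_code: "Fq_linear_code q n C"
    and card_C: "card C = q ^ (3 * h)"
    and min_dist_C: "min_dist C = n - 2"
begin

lemma length_C: "x \<in> C \<Longrightarrow> length x = n"
  using Fq_linear_code unfolding Fq_linear_code_def by blast

lemma zero_in_C: "replicate n 0 \<in> C"
  using Fq_linear_code unfolding Fq_linear_code_def by blast

lemma add_in_C: "x \<in> C \<Longrightarrow> y \<in> C \<Longrightarrow> map2 (+) x y \<in> C"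
  using Fq_linear_code unfolding Fq_linear_code_def by blast

lemma diff_in_C:
  assumes "x \<in> C" "y \<in> C"
  shows "map2 (-) x y \<in> C"
proof -
  have "map (\<lambda>t. (- 1) * t) y \<in> C"
    using Fq_linear_code assms(2) Fq_uminus[OF Fq_one] unfolding Fq_linear_code_def by blast
  then have "map2 (+) x (map (\<lambda>t. (- 1) * t) y) \<in> C"
    using add_in_C[OF assms(1)] by blast
  moreover have "map2 (+) x (map (\<lambda>t. (- 1) * t) y) = map2 (-) x y"
    by (auto simp: zip_map2 comp_def intro!: map_cong)
  ultimately show ?thesis
    by simp
qed

lemma finite_C: "finite C"
proof (rule finite_subset)
  show "C \<subseteq> {xs. set xs \<subseteq> UNIV \<and> length xs = n}"
    using length_C by auto
qed (rule finite_lists_length_eq, simp)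

lemma hamming_ge:
  assumes "x \<in> C" "y \<in> C" "x \<noteq> y"
  shows "n - 2 \<le> hamming x y"
proof -
  have "{hamming x y | x y. x \<in> C \<and> y \<in> C \<and> x \<noteq> y} \<subseteq> (\<lambda>(x, y). hamming x y) ` (C \<times> C)"
    by auto
  then have "finite {hamming x y | x y. x \<in> C \<and> y \<in> C \<and> x \<noteq> y}"
    using finite_C finite_subset by blast
  then have "min_dist C \<le> hamming x y"
    unfolding min_dist_def using assms by (intro Min_le) auto
  then show ?thesis
    using min_dist_C by simp
qed

lemma eq_zero_if_three_zeros:
  assumes "x \<in> C" "a < n" "b < n" "c < n" "distinct [a, b, c]"
    and "x ! a = 0" "x ! b = 0" "x ! c = 0"
  shows "x = replicate n 0"
proof (rule ccontr)
  assume nonzero: "x \<noteq> replicate n 0"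
  have "hamming x (replicate n 0) = card {l. l < n \<and> x ! l \<noteq> 0}"
    unfolding hamming_def using length_C[OF assms(1)] by (intro arg_cong[of _ _ card]) auto
  also have "\<dots> \<le> card ({..<n} - {a, b, c})"
    using assms by (intro card_mono) auto
  also have "\<dots> = n - 3"
    using assms by (simp add: card_Diff_subset)
  moreover have "3 \<le> n"
    using card_mono[of "{..<n}" "{a, b, c}"] assms by simp
  ultimately show False
    using hamming_ge[OF assms(1) zero_in_C nonzero] by linarith
qed

lemma eq_if_agree_on_three:
  assumes "x \<in> C" "y \<in> C" "a < n" "b < n" "c < n" "distinct [a, b, c]"
    and "x ! a = y ! a" "x ! b = y ! b" "x ! c = y ! c"
  shows "x = y"
proof -
  have zero: "map2 (-) x y = replicate n 0"
    using assms length_C by (intro eq_zero_if_three_zeros diff_in_C) auto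
  show ?thesis
  proof (rule nth_equalityI)
    show "length x = length y"
      using assms(1,2) length_C by simp
    show "x ! l = y ! l" if "l < length x" for l
      using arg_cong[OF zero, of "\<lambda>z. z ! l"] that assms(1,2) length_C by simp
  qed
qed

lemma exists_codeword:
  assumes "a < n" "b < n" "c < n" "distinct [a, b, c]"
  shows "\<exists>x\<in>C. x ! a = \<alpha> \<and> x ! b = \<beta> \<and> x ! c = \<gamma>"
proof -
  let ?f = "\<lambda>x. (x ! a, x ! b, x ! c)"
  have "inj_on ?f C"
    using eq_if_agree_on_three assms by (intro inj_onI) auto
  then have "card (?f ` C) = card (UNIV :: 'a set) ^ 3"
    using card_C card_UNIV by (simp add: card_image power_mult mult.commute)
  also have "\<dots> = card (UNIV :: ('a \<times> 'a \<times> 'a) set)"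
    by (simp add: card_cartesian_product power3_eq_cube flip: UNIV_Times_UNIV)
  finally have "card (?f ` C) = card (UNIV :: ('a \<times> 'a \<times> 'a) set)" .
  then have "?f ` C = UNIV"
    by (intro card_subset_eq) auto
  then have "(\<alpha>, \<beta>, \<gamma>) \<in> ?f ` C"
    by simp
  then show ?thesis
    by force
qed

text \<open>\<open>\<Phi> l\<close> is the map that an equivalence of the projection from \<open>k\<close> with a linear
  code applies at coordinate \<open>l \<noteq> k\<close> (indexed as in \<open>C\<close>); the second conjunct says
  that the image is closed under all scalar multiples.\<close>
definition linearises_projection :: "nat \<Rightarrow> (nat \<Rightarrow> 'a \<Rightarrow> 'a) \<Rightarrow> bool" where
  "linearises_projection k \<Phi> \<longleftrightarrow>
     (\<forall>l<n. l \<noteq> k \<longrightarrow> Fq_lin_bij q (\<Phi> l)) \<and>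
     (\<forall>x\<in>C. x ! k = 0 \<longrightarrow>
        (\<forall>s. \<exists>y\<in>C. y ! k = 0 \<and> (\<forall>l<n. l \<noteq> k \<longrightarrow> \<Phi> l (y ! l) = s * \<Phi> l (x ! l))))"

lemma linearises_projection_if_equiv:
  assumes "k < n" "linear_code (n - 1) D" "Fq_equiv q (n - 1) (projection k C) D"
  shows "\<exists>\<Phi>. linearises_projection k \<Phi>"
proof -
  obtain \<sigma> \<phi> where \<sigma>: "\<sigma> permutes {..<n - 1}" and \<phi>: "\<forall>i<n - 1. Fq_lin_bij q (\<phi> i)"
    and D: "D = (\<lambda>z. map (\<lambda>i. \<phi> i (z ! \<sigma> i)) [0..<n - 1]) ` projection k C"
    using assms(3) unfolding Fq_equiv_def by blast
  let ?punct = "\<lambda>x :: 'a list. take k x @ drop (Suc k) x"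
  let ?transform = "\<lambda>z. map (\<lambda>i. \<phi> i (z ! \<sigma> i)) [0..<n - 1]"
  define pos where "pos l = inv \<sigma> (if l < k then l else l - 1)" for l
  have pos: "pos l < n - 1" "\<sigma> (pos l) = (if l < k then l else l - 1)" if "l < n" "l \<noteq> k" for l
    using that assms(1) permutes_in_image[OF permutes_inv[OF \<sigma>]] permutes_inverses(1)[OF \<sigma>]
    by (auto simp: pos_def)
  define \<Phi> where "\<Phi> l = \<phi> (pos l)" for l
  have transform_nth: "?transform (?punct x) ! pos l = \<Phi> l (x ! l)"
    if "x \<in> C" "l < n" "l \<noteq> k" for x l
    using that pos[OF that(2,3)] assms(1) length_C[OF that(1)]
    by (simp add: \<Phi>_def nth_take_append_drop_Suc)
  have "linearises_projection k \<Phi>"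
    unfolding linearises_projection_def
  proof (intro conjI allI impI ballI)
    show "Fq_lin_bij q (\<Phi> l)" if "l < n" "l \<noteq> k" for l
      using \<phi> pos[OF that] by (simp add: \<Phi>_def)
  next
    fix x s
    assume x: "x \<in> C" "x ! k = 0"
    then have "?transform (?punct x) \<in> D"
      unfolding D projection_def by blast
    then have "map (\<lambda>t. s * t) (?transform (?punct x)) \<in> D"
      using assms(2) unfolding linear_code_def by blast
    then obtain y where y: "y \<in> C" "y ! k = 0"
      and y_eq: "map (\<lambda>t. s * t) (?transform (?punct x)) = ?transform (?punct y)"
      unfolding D projection_def by blast
    have "\<Phi> l (y ! l) = s * \<Phi> l (x ! l)" if "l < n" "l \<noteq> k" for l
      using arg_cong[OF y_eq, of "\<lambda>z. z ! pos l"] pos[OF that]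
        transform_nth[OF x(1) that] transform_nth[OF y(1) that]
      by simp
    with y show "\<exists>y\<in>C. y ! k = 0 \<and> (\<forall>l<n. l \<noteq> k \<longrightarrow> \<Phi> l (y ! l) = s * \<Phi> l (x ! l))"
      by blast
  qed
  then show ?thesis
    by blast
qed

lemma linearises_projection_point:
  assumes "linearises_projection k \<Phi>" "i < n" "j < n" "k < n" "distinct [i, j, k]"
  obtains x where "x \<in> C" "x ! k = 0" "\<Phi> i (x ! i) = a" "\<Phi> j (x ! j) = b"
proof -
  have "Fq_lin_bij q (\<Phi> i)" "Fq_lin_bij q (\<Phi> j)"
    using assms unfolding linearises_projection_def by auto
  moreover obtain x where "x \<in> C" "x ! i = inv (\<Phi> i) a" "x ! j = inv (\<Phi> j) b" "x ! k = 0"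
    using exists_codeword[OF assms(2-5)] by blast
  ultimately show ?thesis
    using that by (simp add: Fq_lin_bij_f_inv)
qed

definition linear_chart ::
  "nat \<Rightarrow> nat \<Rightarrow> nat \<Rightarrow> (nat \<Rightarrow> 'a \<Rightarrow> 'a) \<Rightarrow> (nat \<Rightarrow> 'a) \<Rightarrow> (nat \<Rightarrow> 'a) \<Rightarrow> bool" where
  "linear_chart k i j \<Phi> u v \<longleftrightarrow>
     i < n \<and> j < n \<and> k < n \<and> distinct [i, j, k] \<and> linearises_projection k \<Phi> \<and>
     (\<forall>x\<in>C. x ! k = 0 \<longrightarrow>
        (\<forall>l<n. l \<noteq> k \<longrightarrow> \<Phi> l (x ! l) = u l * \<Phi> i (x ! i) + v l * \<Phi> j (x ! j)))"

lemma linearises_projection_coordinates: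
  assumes \<Phi>: "linearises_projection k \<Phi>" and ijk: "i < n" "j < n" "k < n" "distinct [i, j, k]"
    and e1: "e1 \<in> C" "e1 ! k = 0" "\<Phi> i (e1 ! i) = 1" "\<Phi> j (e1 ! j) = 0"
    and e2: "e2 \<in> C" "e2 ! k = 0" "\<Phi> i (e2 ! i) = 0" "\<Phi> j (e2 ! j) = 1"
    and x: "x \<in> C" "x ! k = 0" and l: "l < n" "l \<noteq> k"
  shows "\<Phi> l (x ! l) = \<Phi> i (x ! i) * \<Phi> l (e1 ! l) + \<Phi> j (x ! j) * \<Phi> l (e2 ! l)"
proof -
  have bij: "Fq_lin_bij q (\<Phi> p)" if "p < n" "p \<noteq> k" for p
    using \<Phi> that unfolding linearises_projection_def by blast
  have scale: "\<exists>y\<in>C. y ! k = 0 \<and> (\<forall>p<n. p \<noteq> k \<longrightarrow> \<Phi> p (y ! p) = s * \<Phi> p (e ! p))"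
    if "e \<in> C" "e ! k = 0" for e s
    using \<Phi> that unfolding linearises_projection_def by blast
  obtain y1 where y1: "y1 \<in> C" "y1 ! k = 0"
    "\<forall>p<n. p \<noteq> k \<longrightarrow> \<Phi> p (y1 ! p) = \<Phi> i (x ! i) * \<Phi> p (e1 ! p)"
    using scale[OF e1(1,2)] by blast
  obtain y2 where y2: "y2 \<in> C" "y2 ! k = 0"
    "\<forall>p<n. p \<noteq> k \<longrightarrow> \<Phi> p (y2 ! p) = \<Phi> j (x ! j) * \<Phi> p (e2 ! p)"
    using scale[OF e2(1,2)] by blast
  have sum_nth: "\<Phi> p (map2 (+) y1 y2 ! p) = \<Phi> p (y1 ! p) + \<Phi> p (y2 ! p)" if "p < n" "p \<noteq> k" for p
    using that y1(1) y2(1) length_C Fq_lin_bij_add[OF bij[OF that]] by simp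
  have "map2 (+) y1 y2 = x"
  proof (rule eq_if_agree_on_three[OF add_in_C[OF y1(1) y2(1)] x(1) ijk])
    have "\<Phi> i (map2 (+) y1 y2 ! i) = \<Phi> i (x ! i)"
      using sum_nth[of i] y1(3) y2(3) e1(3) e2(3) ijk by simp
    then show "map2 (+) y1 y2 ! i = x ! i"
      using Fq_lin_bij_eq_iff[OF bij[of i]] ijk by simp
    have "\<Phi> j (map2 (+) y1 y2 ! j) = \<Phi> j (x ! j)"
      using sum_nth[of j] y1(3) y2(3) e1(4) e2(4) ijk by simp
    then show "map2 (+) y1 y2 ! j = x ! j"
      using Fq_lin_bij_eq_iff[OF bij[of j]] ijk by simp
    show "map2 (+) y1 y2 ! k = x ! k"
      using x(2) y1(1,2) y2(1,2) length_C ijk by simp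
  qed
  with sum_nth[OF l] y1(3) y2(3) l show ?thesis
    by simp
qed

lemma exists_linear_chart:
  assumes \<Phi>: "linearises_projection k \<Phi>" and ijk: "i < n" "j < n" "k < n" "distinct [i, j, k]"
  shows "\<exists>u v. linear_chart k i j \<Phi> u v"
proof -
  obtain e1 where e1: "e1 \<in> C" "e1 ! k = 0" "\<Phi> i (e1 ! i) = 1" "\<Phi> j (e1 ! j) = 0"
    using linearises_projection_point[OF \<Phi> ijk] by metis
  obtain e2 where e2: "e2 \<in> C" "e2 ! k = 0" "\<Phi> i (e2 ! i) = 0" "\<Phi> j (e2 ! j) = 1"
    using linearises_projection_point[OF \<Phi> ijk] by metis
  define u where "u l = \<Phi> l (e1 ! l)" for l
  define v where "v l = \<Phi> l (e2 ! l)" for l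
  have "\<Phi> l (x ! l) = u l * \<Phi> i (x ! i) + v l * \<Phi> j (x ! j)"
    if "x \<in> C" "x ! k = 0" "l < n" "l \<noteq> k" for x l
    using linearises_projection_coordinates[OF \<Phi> ijk e1 e2 that] by (simp add: u_def v_def mult.commute)
  with \<Phi> ijk have "linear_chart k i j \<Phi> u v"
    unfolding linear_chart_def by blast
  then show ?thesis
    by blast
qed

lemma exists_linear_charts:
  assumes ijk: "i < n" "j < n" "k < n" "distinct [i, j, k]"
    and projections: "\<forall>l\<in>{i, j, k}. \<exists>D. linear_code (n - 1) D \<and> Fq_equiv q (n - 1) (projection l C) D"
  obtains \<Phi> u v \<Psi> u' v' \<Omega> u'' v'' where "linear_chart k i j \<Phi> u v"
    "linear_chart j i k \<Psi> u' v'" "linear_chart i j k \<Omega> u'' v''"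
proof -
  have linearisable: "\<exists>\<Phi>. linearises_projection l \<Phi>" if "l \<in> {i, j, k}" for l
    using linearises_projection_if_equiv projections ijk that by blast
  have "distinct [i, k, j]" "distinct [j, k, i]"
    using ijk(4) by auto
  then show ?thesis
    using that linearisable exists_linear_chart[OF _ ijk] exists_linear_chart[OF _ ijk(1,3,2)]
      exists_linear_chart[OF _ ijk(2,3,1)]
    by (metis insertCI)
qed

lemma linear_chart_bij: "linear_chart k i j \<Phi> u v \<Longrightarrow> l < n \<Longrightarrow> l \<noteq> k \<Longrightarrow> Fq_lin_bij q (\<Phi> l)"
  unfolding linear_chart_def linearises_projection_def by blast

lemma linear_chart_indices:
  "linear_chart k i j \<Phi> u v \<Longrightarrow> i < n \<and> j < n \<and> k < n \<and> distinct [i, j, k]"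
  unfolding linear_chart_def by blast

lemma linear_chart_zero: "linear_chart k i j \<Phi> u v \<Longrightarrow> l < n \<Longrightarrow> l \<noteq> k \<Longrightarrow> \<Phi> l 0 = 0"
  by (rule Fq_lin_bij_zero[OF linear_chart_bij])

lemma linear_chart_eq_0_iff:
  "linear_chart k i j \<Phi> u v \<Longrightarrow> l < n \<Longrightarrow> l \<noteq> k \<Longrightarrow> \<Phi> l x = 0 \<longleftrightarrow> x = 0"
  by (rule Fq_lin_bij_eq_0_iff[OF linear_chart_bij])

lemma linear_chart_eq:
  "linear_chart k i j \<Phi> u v \<Longrightarrow> x \<in> C \<Longrightarrow> x ! k = 0 \<Longrightarrow> l < n \<Longrightarrow> l \<noteq> k \<Longrightarrow>
    \<Phi> l (x ! l) = u l * \<Phi> i (x ! i) + v l * \<Phi> j (x ! j)"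
  unfolding linear_chart_def by blast

lemma linear_chart_swap:
  assumes "linear_chart k i j \<Phi> u v"
  shows "linear_chart k j i \<Phi> v u"
proof -
  have "i < n \<and> j < n \<and> k < n \<and> distinct [j, i, k] \<and> linearises_projection k \<Phi>"
    using assms unfolding linear_chart_def by auto
  moreover have "\<Phi> l (x ! l) = v l * \<Phi> j (x ! j) + u l * \<Phi> i (x ! i)"
    if "x \<in> C" "x ! k = 0" "l < n" "l \<noteq> k" for x l
    using linear_chart_eq[OF assms that] by (simp only: add.commute)
  ultimately show ?thesis
    unfolding linear_chart_def by blast
qed

lemma linear_chart_axis:
  assumes "linear_chart k i j \<Phi> u v" "x \<in> C" "x ! k = 0" "x ! j = 0" "l < n" "l \<noteq> k"
  shows "\<Phi> l (x ! l) = u l * \<Phi> i (x ! i)"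
  using linear_chart_eq[OF assms(1-3,5,6)] assms(4) linear_chart_zero[OF assms(1), of j]
    linear_chart_indices[OF assms(1)] by simp

lemma linear_chart_point:
  assumes "linear_chart k i j \<Phi> u v"
  obtains x where "x \<in> C" "x ! k = 0" "\<Phi> i (x ! i) = a" "\<Phi> j (x ! j) = b"
  using assms linearises_projection_point unfolding linear_chart_def by metis

lemma linear_chart_coeff_nonzero:
  assumes \<Phi>: "linear_chart k i j \<Phi> u v" and l: "l < n" "l \<noteq> j" "l \<noteq> k"
  shows "u l \<noteq> 0"
proof
  assume "u l = 0"
  obtain x where x: "x \<in> C" "x ! k = 0" "\<Phi> i (x ! i) = 1" "\<Phi> j (x ! j) = 0"
    using linear_chart_point[OF \<Phi>] by metis
  have ijk: "i < n" "j < n" "k < n" "distinct [i, j, k]"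
    using linear_chart_indices[OF \<Phi>] by auto
  have "x ! j = 0"
    using x(4) linear_chart_eq_0_iff[OF \<Phi>, of j] ijk by simp
  moreover have "x ! l = 0"
    using linear_chart_axis[OF \<Phi> x(1,2) \<open>x ! j = 0\<close> l(1,3)] \<open>u l = 0\<close>
      linear_chart_eq_0_iff[OF \<Phi> l(1,3)] by simp
  moreover have "distinct [j, k, l]"
    using ijk l by auto
  ultimately have "x = replicate n 0"
    using eq_zero_if_three_zeros[OF x(1) ijk(2,3) l(1)] x(2) by blast
  then show False
    using x(3) ijk linear_chart_zero[OF \<Phi>, of i] by simp
qed

lemma linear_chart_coeffs_independent:
  assumes \<Phi>: "linear_chart k i j \<Phi> u v"
    and l: "l < n" "l' < n" "l \<notin> {i, j, k}" "l' \<notin> {i, j, k}" "l \<noteq> l'"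
  shows "u l * v l' \<noteq> u l' * v l"
proof
  assume eq: "u l * v l' = u l' * v l"
  have ijk: "i < n" "j < n" "k < n" "distinct [i, j, k]"
    using linear_chart_indices[OF \<Phi>] by auto
  obtain x where x: "x \<in> C" "x ! k = 0" "\<Phi> i (x ! i) = v l" "\<Phi> j (x ! j) = - u l"
    using linear_chart_point[OF \<Phi>] by metis
  have "\<Phi> l (x ! l) = 0" "\<Phi> l' (x ! l') = 0"
    using linear_chart_eq[OF \<Phi> x(1,2)] x(3,4) l eq by (auto simp: mult.commute)
  then have "x ! l = 0" "x ! l' = 0"
    using linear_chart_eq_0_iff[OF \<Phi>] l by auto
  moreover have "distinct [k, l, l']"
    using l by auto
  ultimately have "x = replicate n 0"
    using eq_zero_if_three_zeros[OF x(1) ijk(3) l(1,2)] x(2) by blast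
  then have "v l = 0"
    using x(3) ijk linear_chart_zero[OF \<Phi>, of i] by simp
  then show False
    using linear_chart_coeff_nonzero[OF linear_chart_swap[OF \<Phi>]] l by auto
qed

lemma cross_ratio_self:
  assumes "linear_chart k i j \<Phi> u v" "t < n" "t \<notin> {i, j, k}"
  shows "cross_ratio u v t t = 1"
  using linear_chart_coeff_nonzero[OF assms(1)]
    linear_chart_coeff_nonzero[OF linear_chart_swap[OF assms(1)]] assms(2,3)
  by (simp add: cross_ratio_def)

lemma cross_ratios_nonzero_inj:
  assumes \<Phi>: "linear_chart k i j \<Phi> u v" and t: "t < n" "t \<notin> {i, j, k}"
    and lj: "lj ` A \<subseteq> {..<n} - {i, j, k}" "inj_on lj A"
  shows "\<forall>p\<in>A. cross_ratio u v t (lj p) \<noteq> 0" and "inj_on (\<lambda>p. cross_ratio u v t (lj p)) A"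
proof -
  have nonzero: "u l \<noteq> 0" "v l \<noteq> 0" if "l \<in> insert t (lj ` A)" for l
    using linear_chart_coeff_nonzero[OF \<Phi>] linear_chart_coeff_nonzero[OF linear_chart_swap[OF \<Phi>]]
      that t lj(1) by auto
  then show "\<forall>p\<in>A. cross_ratio u v t (lj p) \<noteq> 0"
    by (simp add: cross_ratio_def)
  show "inj_on (\<lambda>p. cross_ratio u v t (lj p)) A"
  proof (rule inj_onI)
    fix p p'
    assume p: "p \<in> A" "p' \<in> A" and eq: "cross_ratio u v t (lj p) = cross_ratio u v t (lj p')"
    with nonzero have "u (lj p) * v (lj p') = u (lj p') * v (lj p)"
      by (auto simp: cross_ratio_def field_simps)
    with linear_chart_coeffs_independent[OF \<Phi>] p lj have "lj p = lj p'"
      by blast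
    with p lj(2) show "p = p'"
      by (simp add: inj_on_eq_iff)
  qed
qed

text \<open>Moving along the line \<open>x\<^sub>k = x\<^sub>i = 0\<close> and then along \<open>x\<^sub>k = x\<^sub>j = 0\<close>, through
  a common value at coordinate \<open>l\<close>, rescales coordinate \<open>t\<close> by the cross ratio.\<close>
lemma linear_chart_transport:
  assumes \<Phi>: "linear_chart k i j \<Phi> u v"
    and x: "x \<in> C" "x ! k = 0" "x ! i = 0" and y: "y \<in> C" "y ! k = 0" "y ! j = 0"
    and xy: "x ! l = y ! l" and t: "t < n" "t \<notin> {i, j, k}" and l: "l < n" "l \<notin> {i, j, k}"
  shows "\<Phi> t (y ! t) = cross_ratio u v t l * \<Phi> t (x ! t)"
proof -
  have "\<Phi> t (x ! t) = v t * \<Phi> j (x ! j)" "\<Phi> l (x ! l) = v l * \<Phi> j (x ! j)"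
    using linear_chart_axis[OF linear_chart_swap[OF \<Phi>] x] t l by auto
  moreover have "\<Phi> t (y ! t) = u t * \<Phi> i (y ! i)" "\<Phi> l (y ! l) = u l * \<Phi> i (y ! i)"
    using linear_chart_axis[OF \<Phi> y] t l by auto
  moreover have "u l \<noteq> 0" "v t \<noteq> 0"
    using linear_chart_coeff_nonzero[OF \<Phi>] linear_chart_coeff_nonzero[OF linear_chart_swap[OF \<Phi>]]
      t l by auto
  ultimately show ?thesis
    using xy by (simp add: cross_ratio_def field_simps)
qed

text \<open>The identity behind \<open>(Prop\<^sub>m)\<close>: the transition maps \<open>\<Phi> t \<circ> inv (\<Psi> t)\<close> and
  \<open>\<Phi> t \<circ> inv (\<Omega> t)\<close> are intertwined by the cross ratios of every further coordinate \<open>l\<close>.\<close>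
lemma transition_conjugation:
  assumes \<Phi>: "linear_chart k i j \<Phi> u v" and \<Psi>: "linear_chart j i k \<Psi> u' v'"
    and \<Omega>: "linear_chart i j k \<Omega> u'' v''"
    and t: "t < n" "t \<notin> {i, j, k}" and l: "l < n" "l \<notin> {i, j, k}"
  shows "cross_ratio v u t l * \<Phi> t (inv (\<Psi> t) (cross_ratio u' v' t l * \<Psi> t z)) =
    \<Phi> t (inv (\<Omega> t) (cross_ratio u'' v'' t l * \<Omega> t z))"
proof -
  have ijk: "i < n" "j < n" "k < n" "distinct [i, j, k]"
    using linear_chart_indices[OF \<Phi>] by auto
  obtain c1 where c1: "c1 \<in> C" "c1 ! i = 0" "c1 ! j = 0" "c1 ! t = z"
    using exists_codeword[of i j t 0 0 z] ijk t by auto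
  obtain c2 where c2: "c2 \<in> C" "c2 ! i = 0" "c2 ! k = 0" "c2 ! l = c1 ! l"
    using exists_codeword[of i k l 0 0 "c1 ! l"] ijk l by auto
  obtain c3 where c3: "c3 \<in> C" "c3 ! j = 0" "c3 ! k = 0" "c3 ! l = c1 ! l"
    using exists_codeword[of j k l 0 0 "c1 ! l"] ijk l by auto
  have "\<Psi> t (c3 ! t) = cross_ratio u' v' t l * \<Psi> t z"
    using linear_chart_transport[OF \<Psi> c1(1,3,2) c3(1,2,3)] c1(4) c3(4) t l by auto
  then have \<Psi>_step: "inv (\<Psi> t) (cross_ratio u' v' t l * \<Psi> t z) = c3 ! t"
    using linear_chart_bij[OF \<Psi>] t by (metis Fq_lin_bij_inv_f insertCI)
  have "\<Omega> t (c2 ! t) = cross_ratio u'' v'' t l * \<Omega> t z"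
    using linear_chart_transport[OF \<Omega> c1(1,2,3) c2(1,2,3)] c1(4) c2(4) t l by auto
  then have \<Omega>_step: "inv (\<Omega> t) (cross_ratio u'' v'' t l * \<Omega> t z) = c2 ! t"
    using linear_chart_bij[OF \<Omega>] t by (metis Fq_lin_bij_inv_f insertCI)
  have "\<Phi> t (c2 ! t) = cross_ratio v u t l * \<Phi> t (c3 ! t)"
    using linear_chart_transport[OF linear_chart_swap[OF \<Phi>] c3(1,3,2) c2(1,3,2)] c2(4) c3(4) t l
    by auto
  then show ?thesis
    by (simp add: \<Psi>_step \<Omega>_step)
qed

lemma Prop_transition_maps:
  assumes \<Phi>: "linear_chart k i j \<Phi> u v" and \<Psi>: "linear_chart j i k \<Psi> u' v'"
    and \<Omega>: "linear_chart i j k \<Omega> u'' v''"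
    and lj: "lj ` {1..m} \<subseteq> {..<n} - {i, j, k}" "inj_on lj {1..m}" and t: "lj 1 = t" "1 \<le> m"
    and F: "lin_eval q h F = \<Phi> t \<circ> inv (\<Psi> t)" and G: "lin_eval q h G = \<Phi> t \<circ> inv (\<Omega> t)"
  shows "Prop q h m F G"
proof -
  have "t \<in> {..<n} - {i, j, k}"
    unfolding t(1)[symmetric] using t(2) by (intro subsetD[OF lj(1)] imageI) auto
  then have t_range: "t < n" "t \<notin> {i, j, k}" "t \<notin> {j, i, k}" "t \<notin> {i, k, j}" "t \<notin> {j, k, i}"
    by auto
  have lj_range: "lj ` {1..m} \<subseteq> {..<n} - {j, i, k}" "lj ` {1..m} \<subseteq> {..<n} - {i, k, j}"
    "lj ` {1..m} \<subseteq> {..<n} - {j, k, i}"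
    using lj(1) by auto
  have lj_p: "lj p < n" "lj p \<notin> {i, j, k}" if "p \<in> {1..m}" for p
    using lj(1) that unfolding image_subset_iff by auto
  have bij: "bij (\<Phi> t)" "bij (\<Psi> t)" "bij (\<Omega> t)"
    using linear_chart_bij[OF \<Phi>] linear_chart_bij[OF \<Psi>] linear_chart_bij[OF \<Omega>] t_range
    unfolding Fq_lin_bij_def by auto
  then have inv_FG: "inv (\<Phi> t \<circ> inv (\<Psi> t)) = \<Psi> t \<circ> inv (\<Phi> t)"
    "inv (\<Phi> t \<circ> inv (\<Omega> t)) = \<Omega> t \<circ> inv (\<Phi> t)"
    by (simp_all add: o_inv_distrib bij_imp_bij_inv inv_inv_eq)
  let ?A = "\<lambda>p. cross_ratio v u t (lj p)"
  let ?B = "\<lambda>p. cross_ratio u' v' t (lj p)"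
  let ?C = "\<lambda>p. cross_ratio u'' v'' t (lj p)"
  have conjugation: "\<forall>p\<in>{1..m}. \<forall>x. ?A p * lin_eval q h F (?B p * inv (lin_eval q h F) x) =
      lin_eval q h G (?C p * inv (lin_eval q h G) x)"
    using transition_conjugation[OF \<Phi> \<Psi> \<Omega> t_range(1,2) lj_p] bij
    by (simp add: inv_FG F G bij_is_surj surj_f_inv_f)
  have nonzero_inj: "\<forall>p\<in>{1..m}. ?A p \<noteq> 0 \<and> ?B p \<noteq> 0 \<and> ?C p \<noteq> 0"
    "inj_on ?A {1..m}" "inj_on ?B {1..m}" "inj_on ?C {1..m}"
    using cross_ratios_nonzero_inj[OF linear_chart_swap[OF \<Phi>] t_range(1,3) lj_range(1) lj(2)]
      cross_ratios_nonzero_inj[OF \<Psi> t_range(1,4) lj_range(2) lj(2)]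
      cross_ratios_nonzero_inj[OF \<Omega> t_range(1,5) lj_range(3) lj(2)]
    by auto
  have one: "?A 1 = 1" "?B 1 = 1" "?C 1 = 1"
    using cross_ratio_self[OF linear_chart_swap[OF \<Phi>]] cross_ratio_self[OF \<Psi>]
      cross_ratio_self[OF \<Omega>] t_range t(1) by auto
  show ?thesis
    unfolding Prop_def
    by (rule exI[of _ ?A], rule exI[of _ ?B], rule exI[of _ ?C]) (intro conjI; fact)
qed

lemma monomial_transition:
  assumes \<Phi>: "linear_chart k i j \<Phi> u v" and \<Psi>: "linear_chart j i k \<Psi> u' v'"
    and \<Omega>: "linear_chart i j k \<Omega> u'' v''" and m: "1 \<le> m" "3 + m \<le> n"
    and monomial: "\<forall>f g :: nat \<Rightarrow> 'a. lin_invertible q h f \<and> lin_invertible q h g \<and> Prop q h m f g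
      \<longrightarrow> lin_monomial h f \<and> lin_monomial h g"
  obtains t c s where "t < n" "t \<notin> {i, j, k}" "\<And>y. \<Phi> t y = c * \<Psi> t y ^ q ^ s"
proof -
  have "card {1..m} \<le> card ({..<n} - {i, j, k})"
    using m linear_chart_indices[OF \<Phi>] by (simp add: card_Diff_subset)
  then obtain lj where lj: "lj ` {1..m} \<subseteq> {..<n} - {i, j, k}" "inj_on lj {1..m}"
    using card_le_inj[of "{1..m}" "{..<n} - {i, j, k}"] by auto
  define t where "t = lj 1"
  have "t \<in> {..<n} - {i, j, k}"
    unfolding t_def using m by (intro subsetD[OF lj(1)] imageI) auto
  then have t: "t < n" "t \<notin> {i, j, k}"
    by auto
  have "Fq_lin_bij q (\<Phi> t \<circ> inv (\<Psi> t))" "Fq_lin_bij q (\<Phi> t \<circ> inv (\<Omega> t))"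
    using linear_chart_bij[OF \<Phi>] linear_chart_bij[OF \<Psi>] linear_chart_bij[OF \<Omega>] t
    by (auto intro!: Fq_lin_bij_comp Fq_lin_bij_inv)
  moreover have "Fq_lin_bij q \<phi> \<Longrightarrow> \<phi> \<in> Fq_linear_maps" for \<phi>
    unfolding Fq_lin_bij_def Fq_linear_maps_def by blast
  ultimately obtain F G where F: "lin_eval q h F = \<Phi> t \<circ> inv (\<Psi> t)"
    and G: "lin_eval q h G = \<Phi> t \<circ> inv (\<Omega> t)"
    by (metis Fq_linear_map_is_lin_eval)
  have "Prop q h m F G"
    using Prop_transition_maps[OF \<Phi> \<Psi> \<Omega> lj t_def[symmetric] m(1) F G] .
  moreover have "lin_invertible q h F" "lin_invertible q h G"
    using \<open>Fq_lin_bij q (\<Phi> t \<circ> inv (\<Psi> t))\<close> \<open>Fq_lin_bij q (\<Phi> t \<circ> inv (\<Omega> t))\<close>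
    unfolding lin_invertible_def Fq_lin_bij_def F G by auto
  ultimately have "lin_monomial h F"
    using monomial by blast
  then obtain s where s: "\<And>y. lin_eval q h F y = F s * y ^ q ^ s"
    using lin_monomial_eval[where q = q] by blast
  have "Fq_lin_bij q (\<Psi> t)"
    using linear_chart_bij[OF \<Psi>] t by auto
  then have "\<Phi> t y = F s * \<Psi> t y ^ q ^ s" for y
    using s[of "\<Psi> t y"] by (simp add: F Fq_lin_bij_inv_f)
  with t show ?thesis
    using that by blast
qed

lemma linear_chart_frobenius_relation:
  assumes \<Phi>: "linear_chart k i j \<Phi> u v" and \<Psi>: "linear_chart j i k \<Psi> u' v'"
    and t: "t < n" "t \<notin> {i, j, k}" and transition: "\<And>y. \<Phi> t y = c * \<Psi> t y ^ q ^ s"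
    and l: "l < n" "l \<noteq> j" "l \<noteq> k"
  shows "\<exists>\<kappa>. \<forall>y. \<Phi> l y = \<kappa> * \<Psi> l y ^ q ^ s"
proof -
  let ?\<kappa> = "u l * c * u' t ^ q ^ s / (u t * u' l ^ q ^ s)"
  have ijk: "i < n" "j < n" "k < n" "distinct [i, j, k]"
    using linear_chart_indices[OF \<Phi>] by auto
  have "\<Phi> l y = ?\<kappa> * \<Psi> l y ^ q ^ s" for y
  proof -
    obtain d where d: "d \<in> C" "d ! j = 0" "d ! k = 0" "d ! l = y"
      using exists_codeword[of j k l 0 0 y] ijk l by auto
    have "\<Phi> l y = u l * \<Phi> i (d ! i)" "\<Phi> t (d ! t) = u t * \<Phi> i (d ! i)"
      using linear_chart_axis[OF \<Phi> d(1,3,2)] d(4) l t by auto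
    moreover have "\<Psi> l y = u' l * \<Psi> i (d ! i)" "\<Psi> t (d ! t) = u' t * \<Psi> i (d ! i)"
      using linear_chart_axis[OF \<Psi> d(1,2,3)] d(4) l t by auto
    moreover have "u t \<noteq> 0" "u' l \<noteq> 0"
      using linear_chart_coeff_nonzero[OF \<Phi>] linear_chart_coeff_nonzero[OF \<Psi>] t l by auto
    ultimately show ?thesis
      using transition[of "d ! t"] by (simp add: field_simps)
  qed
  then show ?thesis
    by blast
qed

lemma coordinates_linear_after_twist:
  assumes \<Phi>: "linear_chart k i j \<Phi> u v" and \<Psi>: "linear_chart j i k \<Psi> u' v'"
    and t: "t < n" "t \<notin> {i, j, k}" and transition: "\<And>y. \<Phi> t y = c * \<Psi> t y ^ q ^ s"
    and l: "l < n" "l \<notin> {i, j, k}"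
  shows "\<exists>a b d. \<forall>x\<in>C. \<Phi> l (x ! l) = a * \<Phi> i (x ! i) + b * \<Phi> j (x ! j) + d * \<Psi> k (x ! k) ^ q ^ s"
proof -
  have ijk: "i < n" "j < n" "k < n" "distinct [i, j, k]"
    using linear_chart_indices[OF \<Phi>] by auto
  obtain \<kappa> where \<kappa>: "\<And>y. \<Phi> l y = \<kappa> * \<Psi> l y ^ q ^ s"
    using linear_chart_frobenius_relation[OF \<Phi> \<Psi> t transition] l by auto
  have "\<Phi> l (x ! l) = u l * \<Phi> i (x ! i) + v l * \<Phi> j (x ! j) + (\<kappa> * v' l ^ q ^ s) * \<Psi> k (x ! k) ^ q ^ s"
    if x: "x \<in> C" for x
  proof -
    obtain z where z: "z \<in> C" "z ! i = 0" "z ! j = 0" "z ! k = x ! k"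
      using exists_codeword[OF ijk] by blast
    let ?y = "map2 (-) x z"
    have y: "?y \<in> C" "?y ! k = 0" "?y ! i = x ! i" "?y ! j = x ! j" "x ! l = ?y ! l + z ! l"
      using diff_in_C[OF x z(1)] z ijk l length_C[OF x] length_C[OF z(1)] by auto
    have "\<Phi> l (x ! l) = \<Phi> l (?y ! l) + \<Phi> l (z ! l)"
      using y(5) Fq_lin_bij_add[OF linear_chart_bij[OF \<Phi>]] l by auto
    also have "\<Phi> l (?y ! l) = u l * \<Phi> i (x ! i) + v l * \<Phi> j (x ! j)"
      using linear_chart_eq[OF \<Phi> y(1,2)] y(3,4) l by auto
    also have "\<Phi> l (z ! l) = (\<kappa> * v' l ^ q ^ s) * \<Psi> k (x ! k) ^ q ^ s"
      using \<kappa>[of "z ! l"] linear_chart_axis[OF linear_chart_swap[OF \<Psi>] z(1,3,2)] z(4) l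
      by (auto simp: power_mult_distrib)
    finally show ?thesis .
  qed
  then show ?thesis
    by blast
qed

lemma scaled_codeword_if_coordinates_linear:
  assumes ijk: "i < n" "j < n" "k < n" "distinct [i, j, k]"
    and bij: "\<And>l. l < n \<Longrightarrow> Fq_lin_bij q (\<xi> l)"
    and lin: "\<And>l. l < n \<Longrightarrow>
      \<exists>a b d. \<forall>x\<in>C. \<xi> l (x ! l) = a * \<xi> i (x ! i) + b * \<xi> j (x ! j) + d * \<xi> k (x ! k)"
    and x: "x \<in> C"
  obtains y where "y \<in> C" "\<And>l. l < n \<Longrightarrow> \<xi> l (y ! l) = c * \<xi> l (x ! l)"
proof -
  obtain y where y: "y \<in> C" "y ! i = inv (\<xi> i) (c * \<xi> i (x ! i))"
    "y ! j = inv (\<xi> j) (c * \<xi> j (x ! j))" "y ! k = inv (\<xi> k) (c * \<xi> k (x ! k))"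
    using exists_codeword[OF ijk] by blast
  have y_scaled: "\<xi> p (y ! p) = c * \<xi> p (x ! p)" if "p \<in> {i, j, k}" for p
    using that y ijk Fq_lin_bij_f_inv[OF bij] by auto
  have "\<xi> l (y ! l) = c * \<xi> l (x ! l)" if l: "l < n" for l
  proof -
    obtain a b d where "\<forall>x\<in>C. \<xi> l (x ! l) = a * \<xi> i (x ! i) + b * \<xi> j (x ! j) + d * \<xi> k (x ! k)"
      using lin[OF l] by blast
    with x y(1) y_scaled show ?thesis
      by (simp add: algebra_simps)
  qed
  with y(1) that show ?thesis
    by blast
qed

lemma linear_code_equiv_if_coordinates_linear:
  assumes ijk: "i < n" "j < n" "k < n" "distinct [i, j, k]"
    and bij: "\<And>l. l < n \<Longrightarrow> Fq_lin_bij q (\<xi> l)"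
    and lin: "\<And>l. l < n \<Longrightarrow>
      \<exists>a b d. \<forall>x\<in>C. \<xi> l (x ! l) = a * \<xi> i (x ! i) + b * \<xi> j (x ! j) + d * \<xi> k (x ! k)"
  shows "\<exists>D. linear_code n D \<and> Fq_equiv q n C D"
proof -
  define img where "img x = map (\<lambda>l. \<xi> l (x ! l)) [0..<n]" for x
  have "linear_code n (img ` C)"
    unfolding linear_code_def
  proof (intro conjI ballI allI)
    show "img ` C \<subseteq> {x. length x = n}"
      by (auto simp: img_def)
    have "img (replicate n 0) = replicate n 0"
      by (rule nth_equalityI) (simp_all add: img_def Fq_lin_bij_zero[OF bij])
    then show "replicate n 0 \<in> img ` C"
      using zero_in_C by (metis image_eqI)
  next
    fix a b
    assume "a \<in> img ` C" "b \<in> img ` C"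
    then obtain x y where xy: "x \<in> C" "y \<in> C" "a = img x" "b = img y"
      by blast
    have "img (map2 (+) x y) = map2 (+) (img x) (img y)"
      using length_C[OF xy(1)] length_C[OF xy(2)]
      by (intro nth_equalityI) (simp_all add: img_def Fq_lin_bij_add[OF bij])
    then show "map2 (+) a b \<in> img ` C"
      using add_in_C[OF xy(1,2)] xy(3,4) by (metis image_eqI)
  next
    fix c a
    assume "a \<in> img ` C"
    then obtain x where x: "x \<in> C" "a = img x"
      by blast
    obtain y where "y \<in> C" "\<And>l. l < n \<Longrightarrow> \<xi> l (y ! l) = c * \<xi> l (x ! l)"
      using scaled_codeword_if_coordinates_linear[OF ijk bij lin x(1)] by blast
    then have "img y = map (\<lambda>t. c * t) (img x)"
      by (intro nth_equalityI) (simp_all add: img_def)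
    with \<open>y \<in> C\<close> x(2) show "map (\<lambda>t. c * t) a \<in> img ` C"
      by (metis image_eqI)
  qed
  moreover have "Fq_equiv q n C (img ` C)"
    unfolding Fq_equiv_def img_def
    by (intro exI[of _ id] exI[of _ \<xi>] conjI) (auto simp: bij)
  ultimately show ?thesis
    by blast
qed

lemma linear_code_equiv_if_frobenius_transition:
  assumes \<Phi>: "linear_chart k i j \<Phi> u v" and \<Psi>: "linear_chart j i k \<Psi> u' v'"
    and t: "t < n" "t \<notin> {i, j, k}" and transition: "\<And>y. \<Phi> t y = c * \<Psi> t y ^ q ^ s"
  shows "\<exists>D. linear_code n D \<and> Fq_equiv q n C D"
proof -
  have ijk: "i < n" "j < n" "k < n" "distinct [i, j, k]"
    using linear_chart_indices[OF \<Phi>] by auto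
  define \<xi> where "\<xi> l = (if l = k then (\<lambda>y. \<Psi> k y ^ q ^ s) else \<Phi> l)" for l
  show ?thesis
  proof (rule linear_code_equiv_if_coordinates_linear[OF ijk])
    show "Fq_lin_bij q (\<xi> l)" if "l < n" for l
      using Fq_lin_bij_comp[OF Fq_lin_bij_frobenius_power linear_chart_bij[OF \<Psi>, of k]]
        linear_chart_bij[OF \<Phi>, of l] that ijk
      by (auto simp: \<xi>_def comp_def)
    show "\<exists>a b d. \<forall>x\<in>C. \<xi> l (x ! l) = a * \<xi> i (x ! i) + b * \<xi> j (x ! j) + d * \<xi> k (x ! k)"
      if "l < n" for l
    proof -
      consider "l = k" | "l = i" | "l = j" | "l \<notin> {i, j, k}"
        by auto
      then show ?thesis
      proof cases
        case 1
        then have "\<forall>x\<in>C. \<xi> l (x ! l) = 0 * \<xi> i (x ! i) + 0 * \<xi> j (x ! j) + 1 * \<xi> k (x ! k)"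
          by simp
        then show ?thesis
          by blast
      next
        case 2
        with ijk have "\<forall>x\<in>C. \<xi> l (x ! l) = 1 * \<xi> i (x ! i) + 0 * \<xi> j (x ! j) + 0 * \<xi> k (x ! k)"
          by (simp add: \<xi>_def)
        then show ?thesis
          by blast
      next
        case 3
        with ijk have "\<forall>x\<in>C. \<xi> l (x ! l) = 0 * \<xi> i (x ! i) + 1 * \<xi> j (x ! j) + 0 * \<xi> k (x ! k)"
          by (simp add: \<xi>_def)
        then show ?thesis
          by blast
      next
        case 4
        with coordinates_linear_after_twist[OF \<Phi> \<Psi> t transition that] ijk show ?thesis
          by (simp add: \<xi>_def)
      qed
    qed
  qed
qed

end

theorem lemma5p10:
  fixes q h m n :: nat and C :: "'a::{finite,field} list set"
  assumes "prime_power q" and "h \<ge> 1" and "m \<ge> 1"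
    and "card (UNIV :: 'a set) = q ^ h"
    and "\<forall>f g :: nat \<Rightarrow> 'a. lin_invertible q h f \<and> lin_invertible q h g \<and> Prop q h m f g
            \<longrightarrow> lin_monomial h f \<and> lin_monomial h g"
    and "Fq_linear_code q n C" and "card C = q ^ (3 * h)" and "min_dist C = n - 2"
    and "n \<ge> 3 + m"
    and "\<exists>i j k. i < n \<and> j < n \<and> k < n \<and> i \<noteq> j \<and> i \<noteq> k \<and> j \<noteq> k \<and>
           (\<forall>l\<in>{i, j, k}. \<exists>D. linear_code (n - 1) D \<and> Fq_equiv q (n - 1) (projection l C) D)"
  shows "\<exists>D. linear_code n D \<and> Fq_equiv q n C D"
proof -
  interpret mds_code q h "TYPE('a)" n C
    using assms by unfold_locales auto
  obtain i j k where ijk: "i < n" "j < n" "k < n" "distinct [i, j, k]"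
    and projections: "\<forall>l\<in>{i, j, k}. \<exists>D. linear_code (n - 1) D \<and> Fq_equiv q (n - 1) (projection l C) D"
    using assms(10) by auto
  obtain \<Phi> u v \<Psi> u' v' \<Omega> u'' v'' where \<Phi>: "linear_chart k i j \<Phi> u v"
    and \<Psi>: "linear_chart j i k \<Psi> u' v'" and \<Omega>: "linear_chart i j k \<Omega> u'' v''"
    using exists_linear_charts[OF ijk projections] by blast
  obtain t c s where "t < n" "t \<notin> {i, j, k}" "\<And>y. \<Phi> t y = c * \<Psi> t y ^ q ^ s"
    using monomial_transition[OF \<Phi> \<Psi> \<Omega> assms(3,9,5)] by blast
  then show ?thesis
    by (rule linear_code_equiv_if_frobenius_transition[OF \<Phi> \<Psi>])
qed

end
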